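(* Let $\omega$ be a rectilinearly-convex obstacle, and let $S$ be a finite set of closed line segments inside $\omega$ such that (1) $S$ intersects each of the four extreme edges of $\omega$ and (2) $\bigcup_{s\in S}s$ is connected. Then $S$ is a skeleton for $\omega$.
   Context: An obstacle $\omega$ is a simple polygon in $\mathbb{R}^2$ (a closed, bounded polygonal region without holes whose boundary does not intersect itself), assumed in general position (no three of its vertices are collinear); edges of $\omega$ are those of its boundary. $\omega$ is rectilinear if each edge is horizontal or vertical, and a rectilinear obstacle is rectilinearly-convex if any two points of $\omega$ can be joined by a shortest rectilinear path (made of horizontal and vertical segments, of minimum $\ell_1$ length) contained in $\omega$. A corner point of a rectilinear path is a point where a horizontal and a vertical segment of the path meet. A set $S$ of closed line segments is inside $\omega$ if the union of its elements is contained in $\omega$. Such an $S$ is a skeleton for $\omega$ if for every pair of points $p,q$ not in the interior of $\omega$ such that every shortest rectilinear path between $p$ and $q$ with at most one corner point meets the interior of $\omega$, each such path intersects some element of $S$. The bounding box $B(\omega)$ is the smallest closed axis-parallel rectangle containing $\omega$; the extreme edges of $\omega$ are the edges of $\omega$ lying on the boundary of $B(\omega)$ (a rectilinearly-convex obstacle has exactly four: left, right, bottom, top). *)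

theory Defs
  imports "HOL-Analysis.Analysis"
begin

type_synonym pt = "real \<times> real"

definition poly_edge :: "pt list \<Rightarrow> nat \<Rightarrow> pt set" where
  "poly_edge vs i = closed_segment (vs ! i) (vs ! ((i + 1) mod length vs))"

definition poly_edges :: "pt list \<Rightarrow> pt set set" where
  "poly_edges vs = {poly_edge vs i | i. i < length vs}"

definition poly_boundary :: "pt list \<Rightarrow> pt set" where
  "poly_boundary vs = \<Union>(poly_edges vs)"

definition simple_polygon :: "pt list \<Rightarrow> bool" where
  "simple_polygon vs \<longleftrightarrow> length vs \<ge> 3 \<and> distinct vs \<and>
     (\<forall>i < length vs. \<forall>j < length vs. i \<noteq> j \<longrightarrow>
        (if j = (i + 1) mod length vs then poly_edge vs i \<inter> poly_edge vs j = {vs ! j}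
         else if i = (j + 1) mod length vs then poly_edge vs i \<inter> poly_edge vs j = {vs ! i}
         else poly_edge vs i \<inter> poly_edge vs j = {}))"

definition poly_region :: "pt list \<Rightarrow> pt set" where
  "poly_region vs = poly_boundary vs \<union> inside (poly_boundary vs)"

definition general_position :: "pt list \<Rightarrow> bool" where
  "general_position vs \<longleftrightarrow>
     (\<forall>a\<in>set vs. \<forall>b\<in>set vs. \<forall>c\<in>set vs.
        a \<noteq> b \<and> b \<noteq> c \<and> a \<noteq> c \<longrightarrow> \<not> collinear {a, b, c})"

definition rectilinear_polygon :: "pt list \<Rightarrow> bool" where
  "rectilinear_polygon vs \<longleftrightarrow>
     (\<forall>i < length vs. fst (vs ! i) = fst (vs ! ((i + 1) mod length vs))
                    \<or> snd (vs ! i) = snd (vs ! ((i + 1) mod length vs)))"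

definition l1_dist :: "pt \<Rightarrow> pt \<Rightarrow> real" where
  "l1_dist a b = \<bar>fst a - fst b\<bar> + \<bar>snd a - snd b\<bar>"

definition rect_path :: "pt list \<Rightarrow> bool" where
  "rect_path ps \<longleftrightarrow> ps \<noteq> [] \<and>
     (\<forall>i < length ps - 1. fst (ps ! i) = fst (ps ! Suc i) \<or> snd (ps ! i) = snd (ps ! Suc i))"

definition path_set :: "pt list \<Rightarrow> pt set" where
  "path_set ps = set ps \<union> (\<Union>i < length ps - 1. closed_segment (ps ! i) (ps ! Suc i))"

definition path_len :: "pt list \<Rightarrow> real" where
  "path_len ps = (\<Sum>i < length ps - 1. l1_dist (ps ! i) (ps ! Suc i))"

definition rect_path_between :: "pt \<Rightarrow> pt \<Rightarrow> pt list \<Rightarrow> bool" where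
  "rect_path_between p q ps \<longleftrightarrow> rect_path ps \<and> hd ps = p \<and> last ps = q"

definition shortest_rect_path :: "pt \<Rightarrow> pt \<Rightarrow> pt list \<Rightarrow> bool" where
  "shortest_rect_path p q ps \<longleftrightarrow> rect_path_between p q ps \<and>
     (\<forall>ps'. rect_path_between p q ps' \<longrightarrow> path_len ps \<le> path_len ps')"

definition horiz_segs :: "pt list \<Rightarrow> pt set set" where
  "horiz_segs ps = {closed_segment (ps ! i) (ps ! Suc i) | i. i < length ps - 1 \<and>
      snd (ps ! i) = snd (ps ! Suc i) \<and> fst (ps ! i) \<noteq> fst (ps ! Suc i)}"

definition vert_segs :: "pt list \<Rightarrow> pt set set" where
  "vert_segs ps = {closed_segment (ps ! i) (ps ! Suc i) | i. i < length ps - 1 \<and>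
      fst (ps ! i) = fst (ps ! Suc i) \<and> snd (ps ! i) \<noteq> snd (ps ! Suc i)}"

definition corner_points :: "pt list \<Rightarrow> pt set" where
  "corner_points ps = {x. \<exists>h\<in>horiz_segs ps. \<exists>v\<in>vert_segs ps. x \<in> h \<and> x \<in> v}"

definition at_most_one_corner :: "pt list \<Rightarrow> bool" where
  "at_most_one_corner ps \<longleftrightarrow> (\<exists>c. corner_points ps \<subseteq> {c})"

definition rectilinearly_convex :: "pt set \<Rightarrow> bool" where
  "rectilinearly_convex \<omega> \<longleftrightarrow>
     (\<forall>p\<in>\<omega>. \<forall>q\<in>\<omega>. \<exists>ps. shortest_rect_path p q ps \<and> path_set ps \<subseteq> \<omega>)"

definition is_segment :: "pt set \<Rightarrow> bool" where
  "is_segment s \<longleftrightarrow> (\<exists>a b. s = closed_segment a b)"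

definition skeleton :: "pt set \<Rightarrow> pt set set \<Rightarrow> bool" where
  "skeleton \<omega> S \<longleftrightarrow> \<Union>S \<subseteq> \<omega> \<and>
     (\<forall>p q. p \<notin> interior \<omega> \<and> q \<notin> interior \<omega> \<and>
        (\<forall>ps. shortest_rect_path p q ps \<and> at_most_one_corner ps \<longrightarrow>
              path_set ps \<inter> interior \<omega> \<noteq> {}) \<longrightarrow>
        (\<forall>ps. shortest_rect_path p q ps \<and> at_most_one_corner ps \<longrightarrow>
              (\<exists>s\<in>S. path_set ps \<inter> s \<noteq> {})))"

definition bounding_box :: "pt set \<Rightarrow> pt set" where
  "bounding_box \<omega> = {x. Inf (fst ` \<omega>) \<le> fst x \<and> fst x \<le> Sup (fst ` \<omega>) \<and>
                         Inf (snd ` \<omega>) \<le> snd x \<and> snd x \<le> Sup (snd ` \<omega>)}"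

definition extreme_edges :: "pt list \<Rightarrow> pt set set" where
  "extreme_edges vs = {e \<in> poly_edges vs. e \<subseteq> frontier (bounding_box (poly_region vs))}"

end

theory Submission
  imports Defs
begin

(* Rectilinear convexity yields a weak convexity along axis-parallel lines: any two points of the
   region W are joined inside W by a connected set lying in their bounding box. Consequently, a
   non-interior point t on an axis-parallel line through an interior point u has an empty open
   quadrant on the side away from u: otherwise every line parallel to tu and close to it would
   meet W on both sides of t, and a whole square around t would lie in W.

   Let p and q be non-interior points such that both L-shaped paths from p to q meet the interior.
   The empty quadrants at p, at q and at the bend of the L-path allow W minus the L-path to be cut
   into two relatively open parts, each of which contains a point of the union of S: a lowest or
   highest point of W (the union of S contains one, as it meets all four extreme edges), or a point
   where it crosses a leg of the other L-path. Being connected, the union of S meets the L-path.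
   Finally, a shortest rectilinear path with at most one corner contains one of the two L-paths. *)

section \<open>Boxes and box-connected sets\<close>

lemma in_closed_segment_real:
  "(x::real) \<in> closed_segment a b \<longleftrightarrow> a \<le> x \<and> x \<le> b \<or> b \<le> x \<and> x \<le> a"
  by (auto simp: closed_segment_eq_real_ivl)

lemma closed_segment_horizontal: "closed_segment (a, h) (b, h) = closed_segment a b \<times> {h::real}"
proof -
  have "closed_segment (a, h) (b, h) = (\<lambda>x. (x, h)) ` closed_segment a b"
    unfolding closed_segment_def by (auto simp: image_iff algebra_simps) (metis diff_add_cancel)
  then show ?thesis by auto
qed

lemma closed_segment_vertical: "closed_segment (h, a) (h, b) = {h::real} \<times> closed_segment a b"
proof -
  have "closed_segment (h, a) (h, b) = (\<lambda>y. (h, y)) ` closed_segment a b"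
    unfolding closed_segment_def by (auto simp: image_iff algebra_simps) (metis diff_add_cancel)
  then show ?thesis by auto
qed

lemma connected_image_real_segment:
  fixes g :: "'a::topological_space \<Rightarrow> real"
  assumes "connected P" "continuous_on P g" "a \<in> P" "b \<in> P"
  shows "closed_segment (g a) (g b) \<subseteq> g ` P"
proof -
  have "convex (g ` P)"
    using assms(1,2) by (simp add: connected_convex_1 [symmetric] connected_continuous_image)
  then show ?thesis using assms(3,4) by (intro closed_segment_subset) auto
qed

definition rbox :: "pt \<Rightarrow> pt \<Rightarrow> pt set" where
  "rbox a b = closed_segment (fst a) (fst b) \<times> closed_segment (snd a) (snd b)"

lemma closed_segment_subset_rbox: "closed_segment a b \<subseteq> rbox a b"
proof
  fix z assume "z \<in> closed_segment a b"
  then show "z \<in> rbox a b"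
    using closed_segment_PairD[of "fst z" "snd z" "fst a" "snd a" "fst b" "snd b"]
    by (simp add: rbox_def mem_Times_iff)
qed

lemma snd_eq_on_closed_segment:
  fixes a b z :: pt
  assumes "snd a = snd b" "z \<in> closed_segment a b"
  shows "snd z = snd a"
proof -
  have "z \<in> rbox a b" using assms(2) closed_segment_subset_rbox by blast
  then have "snd z \<in> closed_segment (snd a) (snd b)" by (simp add: rbox_def mem_Times_iff)
  then show ?thesis using assms(1) by simp
qed

lemma fst_eq_on_closed_segment:
  fixes a b z :: pt
  assumes "fst a = fst b" "z \<in> closed_segment a b"
  shows "fst z = fst a"
proof -
  have "z \<in> rbox a b" using assms(2) closed_segment_subset_rbox by blast
  then have "fst z \<in> closed_segment (fst a) (fst b)" by (simp add: rbox_def mem_Times_iff)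
  then show ?thesis using assms(1) by simp
qed

definition box_connected :: "pt set \<Rightarrow> bool" where
  "box_connected W \<longleftrightarrow> (\<forall>a\<in>W. \<forall>b\<in>W. \<exists>P \<subseteq> W \<inter> rbox a b. connected P \<and> a \<in> P \<and> b \<in> P)"

lemma box_connected_vertical_section:
  assumes "box_connected W" "a \<in> W" "b \<in> W" "x \<in> closed_segment (fst a) (fst b)"
  obtains y where "y \<in> closed_segment (snd a) (snd b)" "(x, y) \<in> W"
proof -
  obtain P where P: "P \<subseteq> W \<inter> rbox a b" "connected P" "a \<in> P" "b \<in> P"
    using assms(1-3) unfolding box_connected_def by blast
  have "closed_segment (fst a) (fst b) \<subseteq> fst ` P"
    by (rule connected_image_real_segment) (use P in \<open>auto intro: continuous_intros\<close>)
  then have "x \<in> fst ` P" using assms(4) by blast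
  then obtain z where "z \<in> P" "fst z = x" by blast
  with P(1) show thesis by (intro that[of "snd z"]) (auto simp: rbox_def)
qed

lemma box_connected_horizontal_section:
  assumes "box_connected W" "a \<in> W" "b \<in> W" "y \<in> closed_segment (snd a) (snd b)"
  obtains x where "x \<in> closed_segment (fst a) (fst b)" "(x, y) \<in> W"
proof -
  obtain P where P: "P \<subseteq> W \<inter> rbox a b" "connected P" "a \<in> P" "b \<in> P"
    using assms(1-3) unfolding box_connected_def by blast
  have "closed_segment (snd a) (snd b) \<subseteq> snd ` P"
    by (rule connected_image_real_segment) (use P in \<open>auto intro: continuous_intros\<close>)
  then have "y \<in> snd ` P" using assms(4) by blast
  then obtain z where "z \<in> P" "snd z = y" by blast
  with P(1) show thesis by (intro that[of "fst z"]) (auto simp: rbox_def)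
qed

lemma box_connected_linear_image:
  assumes "box_connected W" "linear f" "\<And>a b. f ` rbox a b = rbox (f a) (f b)"
  shows "box_connected (f ` W)"
  unfolding box_connected_def
proof (intro ballI)
  fix a' b' assume "a' \<in> f ` W" "b' \<in> f ` W"
  then obtain a b where ab: "a \<in> W" "b \<in> W" "a' = f a" "b' = f b" by blast
  then obtain P where P: "P \<subseteq> W \<inter> rbox a b" "connected P" "a \<in> P" "b \<in> P"
    using assms(1) unfolding box_connected_def by blast
  have "f ` P \<subseteq> f ` W \<inter> rbox a' b'" using P(1) ab assms(3) by blast
  moreover have "connected (f ` P)"
    using P(2) assms(2) linear_conv_bounded_linear
    by (intro connected_continuous_image linear_continuous_on) auto
  ultimately show "\<exists>P'\<subseteq>f ` W \<inter> rbox a' b'. connected P' \<and> a' \<in> P' \<and> b' \<in> P'"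
    using P(3,4) ab by blast
qed

lemma mem_interior_square:
  fixes t :: pt
  shows "t \<in> interior W \<longleftrightarrow> (\<exists>r>0. {fst t - r<..<fst t + r} \<times> {snd t - r<..<snd t + r} \<subseteq> W)"
proof
  assume "t \<in> interior W"
  then obtain e where e: "e > 0" "ball t e \<subseteq> W" using mem_interior by blast
  have "(x, y) \<in> W" if "x \<in> {fst t - e / 2<..<fst t + e / 2}" "y \<in> {snd t - e / 2<..<snd t + e / 2}"
    for x y
  proof -
    have "dist t (x, y) = sqrt ((fst t - x)\<^sup>2 + (snd t - y)\<^sup>2)"
      by (simp add: dist_Pair_Pair[of "fst t" "snd t", simplified] dist_real_def)
    also have "\<dots> \<le> \<bar>fst t - x\<bar> + \<bar>snd t - y\<bar>" by (rule sqrt_sum_squares_le_sum_abs)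
    also have "\<dots> < e" using that by (auto simp: abs_less_iff)
    finally show ?thesis using e(2) by auto
  qed
  then show "\<exists>r>0. {fst t - r<..<fst t + r} \<times> {snd t - r<..<snd t + r} \<subseteq> W"
    using e(1) by (intro exI[of _ "e / 2"]) auto
next
  assume "\<exists>r>0. {fst t - r<..<fst t + r} \<times> {snd t - r<..<snd t + r} \<subseteq> W"
  then obtain r where "r > 0" "{fst t - r<..<fst t + r} \<times> {snd t - r<..<snd t + r} \<subseteq> W" by blast
  then show "t \<in> interior W"
    by (intro interior_maximal[THEN subsetD,
          of "{fst t - r<..<fst t + r} \<times> {snd t - r<..<snd t + r}"])
       (auto intro: open_Times simp: mem_Times_iff)
qed

definition axis_reflection :: "(pt \<Rightarrow> pt) \<Rightarrow> bool" where
  "axis_reflection f \<longleftrightarrow> f = prod.swap \<or> f = apsnd uminus"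

lemma axis_reflection_involutive: "axis_reflection f \<Longrightarrow> f (f z) = z"
  by (cases z) (auto simp: axis_reflection_def)

lemma axis_reflection_mem_image: "axis_reflection f \<Longrightarrow> z \<in> f ` A \<longleftrightarrow> f z \<in> A"
  by (metis axis_reflection_involutive image_iff)

lemma axis_reflection_inj: "axis_reflection f \<Longrightarrow> inj f"
  by (metis axis_reflection_involutive injI)

lemma axis_reflection_linear: "axis_reflection f \<Longrightarrow> linear f"
  by (auto intro!: linearI simp: axis_reflection_def prod.swap_def apsnd_def map_prod_def
      split: prod.splits)

lemma axis_reflection_interior: "axis_reflection f \<Longrightarrow> interior (f ` W) = f ` interior W"
  by (simp add: axis_reflection_inj axis_reflection_linear interior_injective_linear_image)

lemma axis_reflection_closed_segment:
  "axis_reflection f \<Longrightarrow> f ` closed_segment a b = closed_segment (f a) (f b)"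
  by (simp add: axis_reflection_linear closed_segment_linear_image)

lemma axis_reflection_disjoint: "axis_reflection f \<Longrightarrow> f ` A \<inter> f ` B = {} \<longleftrightarrow> A \<inter> B = {}"
  by (simp add: axis_reflection_inj image_Int [symmetric])

lemma axis_reflection_rbox: "axis_reflection f \<Longrightarrow> f ` rbox a b = rbox (f a) (f b)"
  by (auto simp: axis_reflection_mem_image)
     (auto simp: axis_reflection_def rbox_def in_closed_segment_real)

lemma axis_reflection_box_connected: "axis_reflection f \<Longrightarrow> box_connected W \<Longrightarrow> box_connected (f ` W)"
  by (simp add: axis_reflection_linear axis_reflection_rbox box_connected_linear_image)

lemma quadrant_free_above:
  assumes W: "box_connected W" and u: "u \<in> interior W" "fst u = fst t" "snd u < snd t"
    and t: "t \<notin> interior W"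
  shows "(\<forall>z\<in>W. \<not> (fst z < fst t \<and> snd t < snd z)) \<or> (\<forall>z\<in>W. \<not> (fst t < fst z \<and> snd t < snd z))"
proof (rule ccontr)
  assume "\<not> ?thesis"
  then obtain a b where a: "a \<in> W" "fst a < fst t" "snd t < snd a"
    and b: "b \<in> W" "fst t < fst b" "snd t < snd b" by blast
  obtain r where r: "r > 0" "{fst u - r<..<fst u + r} \<times> {snd u - r<..<snd u + r} \<subseteq> W"
    using u(1) mem_interior_square by blast
  define \<rho> where "\<rho> = min (min r (fst t - fst a))
    (min (fst b - fst t) (min (min (snd a) (snd b) - snd t) (snd t - snd u)))"
  have \<rho>: "\<rho> > 0" "\<rho> \<le> r" "\<rho> \<le> fst t - fst a" "\<rho> \<le> fst b - fst t"
    "\<rho> \<le> snd a - snd t" "\<rho> \<le> snd b - snd t" "\<rho> \<le> snd t - snd u"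
    using a b r u by (simp_all add: \<rho>_def)
  have "(x, y) \<in> W" if x: "\<bar>x - fst t\<bar> < \<rho>" and y: "\<bar>y - snd t\<bar> < \<rho>" for x y
  proof -
    have "x \<in> closed_segment (fst a) (fst b)"
      using x \<rho> by (auto simp: in_closed_segment_real abs_less_iff)
    then obtain h where h: "h \<in> closed_segment (snd a) (snd b)" "(x, h) \<in> W"
      using box_connected_vertical_section[OF W a(1) b(1)] by blast
    have below: "(x, snd u) \<in> W"
      using r(2) x \<rho> u(2) r(1) by (auto simp: abs_less_iff)
    have "y \<in> closed_segment (snd u) h"
      using y h(1) \<rho> by (auto simp: in_closed_segment_real abs_less_iff)
    then obtain x' where "x' \<in> closed_segment x x" "(x', y) \<in> W"
      using box_connected_horizontal_section[OF W below h(2)] by auto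
    then show ?thesis by simp
  qed
  then have "{fst t - \<rho><..<fst t + \<rho>} \<times> {snd t - \<rho><..<snd t + \<rho>} \<subseteq> W"
    by (auto simp: abs_less_iff)
  with \<rho>(1) t show False by (auto simp: mem_interior_square)
qed

lemma quadrant_free_below:
  assumes "box_connected W" "u \<in> interior W" "fst u = fst t" "snd t < snd u" "t \<notin> interior W"
  shows "(\<forall>z\<in>W. \<not> (fst z < fst t \<and> snd z < snd t)) \<or> (\<forall>z\<in>W. \<not> (fst t < fst z \<and> snd z < snd t))"
proof -
  have f: "axis_reflection (apsnd uminus)" by (simp add: axis_reflection_def)
  show ?thesis
    using quadrant_free_above[OF axis_reflection_box_connected[OF f assms(1)],
        of "apsnd uminus u" "apsnd uminus t"] assms(2-)
    by (auto simp: axis_reflection_interior[OF f] axis_reflection_mem_image[OF f]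
        axis_reflection_involutive[OF f])
qed

lemma quadrant_free_right:
  assumes "box_connected W" "u \<in> interior W" "snd u = snd t" "fst u < fst t" "t \<notin> interior W"
  shows "(\<forall>z\<in>W. \<not> (fst t < fst z \<and> snd z < snd t)) \<or> (\<forall>z\<in>W. \<not> (fst t < fst z \<and> snd t < snd z))"
proof -
  have f: "axis_reflection prod.swap" by (simp add: axis_reflection_def)
  show ?thesis
    using quadrant_free_above[OF axis_reflection_box_connected[OF f assms(1)],
        of "prod.swap u" "prod.swap t"] assms(2-)
    by (auto simp: axis_reflection_interior[OF f] axis_reflection_mem_image[OF f])
qed

lemma quadrant_free_left:
  assumes "box_connected W" "u \<in> interior W" "snd u = snd t" "fst t < fst u" "t \<notin> interior W"
  shows "(\<forall>z\<in>W. \<not> (fst z < fst t \<and> snd z < snd t)) \<or> (\<forall>z\<in>W. \<not> (fst z < fst t \<and> snd t < snd z))"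
proof -
  have f: "axis_reflection prod.swap" by (simp add: axis_reflection_def)
  show ?thesis
    using quadrant_free_below[OF axis_reflection_box_connected[OF f assms(1)],
        of "prod.swap u" "prod.swap t"] assms(2-)
    by (auto simp: axis_reflection_interior[OF f] axis_reflection_mem_image[OF f])
qed

section \<open>Connected sets meeting L-shaped paths\<close>

definition spans :: "pt set \<Rightarrow> pt set \<Rightarrow> bool" where
  "spans S W \<longleftrightarrow> S \<subseteq> W \<and> connected S \<and>
     (\<exists>s\<in>S. \<forall>z\<in>W. fst s \<le> fst z) \<and> (\<exists>s\<in>S. \<forall>z\<in>W. fst z \<le> fst s) \<and>
     (\<exists>s\<in>S. \<forall>z\<in>W. snd s \<le> snd z) \<and> (\<exists>s\<in>S. \<forall>z\<in>W. snd z \<le> snd s)"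

lemma axis_reflection_spans:
  assumes f: "axis_reflection f" and S: "spans S W"
  shows "spans (f ` S) (f ` W)"
proof -
  have "connected (f ` S)"
    using S axis_reflection_linear[OF f] linear_conv_bounded_linear unfolding spans_def
    by (intro connected_continuous_image linear_continuous_on) auto
  moreover have "(\<exists>s\<in>f ` S. \<forall>z\<in>f ` W. fst s \<le> fst z) \<and> (\<exists>s\<in>f ` S. \<forall>z\<in>f ` W. fst z \<le> fst s) \<and>
     (\<exists>s\<in>f ` S. \<forall>z\<in>f ` W. snd s \<le> snd z) \<and> (\<exists>s\<in>f ` S. \<forall>z\<in>f ` W. snd z \<le> snd s)"
    using f S unfolding spans_def axis_reflection_def by (elim disjE) (simp; blast)+
  ultimately show ?thesis using S by (auto simp: spans_def)
qed

lemma connected_meets_separator: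
  assumes "connected S" "S \<subseteq> W" "open U" "open V" "U \<inter> V \<inter> W = {}" "W - C \<subseteq> U \<union> V"
    "S \<inter> U \<noteq> {}" "S \<inter> V \<noteq> {}"
  shows "S \<inter> C \<noteq> {}"
proof
  assume "S \<inter> C = {}"
  then have "S \<subseteq> U \<union> V" using assms(2,6) by blast
  moreover have "U \<inter> V \<inter> S = {}" using assms(2,5) by blast
  ultimately show False using connectedD[OF assms(1,3,4)] assms(7,8) by blast
qed

lemma interior_vertical_neighbours:
  fixes u :: pt
  assumes "u \<in> interior W"
  obtains e where "e > 0" "(fst u, snd u - e) \<in> W" "(fst u, snd u + e) \<in> W"
proof -
  obtain r where "r > 0" "{fst u - r<..<fst u + r} \<times> {snd u - r<..<snd u + r} \<subseteq> W"
    using assms mem_interior_square by blast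
  then show thesis by (intro that[of "r / 2"]) auto
qed

lemma spans_meets_horizontal_segment:
  assumes W: "box_connected W" and S: "spans S W" and ab: "a < b"
    and ends: "(a, h) \<notin> interior W" "(b, h) \<notin> interior W"
    and u: "u \<in> interior W" "u \<in> closed_segment (a, h) (b, h)"
  shows "S \<inter> closed_segment (a, h) (b, h) \<noteq> {}"
proof -
  have hu: "snd u = h" and "fst u \<in> closed_segment a b"
    using u(2) by (auto simp: closed_segment_horizontal mem_Times_iff)
  moreover have "fst u \<noteq> a" "fst u \<noteq> b" using u(1) ends hu by (metis prod.collapse)+
  ultimately have au: "a < fst u" "fst u < b" using ab by (auto simp: in_closed_segment_real)
  obtain e where e: "e > 0" "(fst u, h - e) \<in> W" "(fst u, h + e) \<in> W"
    using interior_vertical_neighbours[OF u(1)] hu by blast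
  obtain sB sT where sB: "sB \<in> S" "\<And>z. z \<in> W \<Longrightarrow> snd sB \<le> snd z"
    and sT: "sT \<in> S" "\<And>z. z \<in> W \<Longrightarrow> snd z \<le> snd sT"
    using S unfolding spans_def by blast
  have left: "(\<forall>z\<in>W. \<not> (fst z < a \<and> snd z < h)) \<or> (\<forall>z\<in>W. \<not> (fst z < a \<and> h < snd z))"
    using quadrant_free_left[OF W u(1), of "(a, h)"] ends hu au by auto
  have right: "(\<forall>z\<in>W. \<not> (b < fst z \<and> snd z < h)) \<or> (\<forall>z\<in>W. \<not> (b < fst z \<and> h < snd z))"
    using quadrant_free_right[OF W u(1), of "(b, h)"] ends hu au by auto
  define \<alpha> where "\<alpha> \<longleftrightarrow> (\<forall>z\<in>W. \<not> (fst z < a \<and> snd z < h))"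
  define \<beta> where "\<beta> \<longleftrightarrow> (\<forall>z\<in>W. \<not> (b < fst z \<and> snd z < h))"
  define U where "U = {z::pt. h < snd z \<or> (\<alpha> \<and> fst z < a) \<or> (\<beta> \<and> b < fst z)}"
  define V where "V = {z::pt. snd z < h \<or> (\<not> \<alpha> \<and> fst z < a) \<or> (\<not> \<beta> \<and> b < fst z)}"
  show ?thesis
  proof (rule connected_meets_separator[of S W U V])
    show "connected S" "S \<subseteq> W" using S by (auto simp: spans_def)
    show "open U" "open V" unfolding U_def V_def
      by (intro open_Collect_disj open_Collect_conj open_Collect_const open_Collect_less
          continuous_intros)+
    show "U \<inter> V \<inter> W = {}" using left right ab by (auto simp: U_def V_def \<alpha>_def \<beta>_def)
    show "W - closed_segment (a, h) (b, h) \<subseteq> U \<union> V"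
      by (auto simp: U_def V_def closed_segment_horizontal in_closed_segment_real mem_Times_iff)
    show "S \<inter> U \<noteq> {}" using sT(1) sT(2)[OF e(3)] e(1) by (auto simp: U_def)
    show "S \<inter> V \<noteq> {}" using sB(1) sB(2)[OF e(2)] e(1) by (auto simp: V_def)
  qed
qed

lemma spans_meets_axis_segment:
  assumes "box_connected W" "spans S W" "fst p = fst q \<or> snd p = snd q"
    and "p \<notin> interior W" "q \<notin> interior W" "closed_segment p q \<inter> interior W \<noteq> {}"
  shows "S \<inter> closed_segment p q \<noteq> {}"
proof -
  have horizontal: "S' \<inter> closed_segment p' q' \<noteq> {}"
    if W': "box_connected W'" "spans S' W'" and pq': "snd p' = snd q'"
      and ends': "p' \<notin> interior W'" "q' \<notin> interior W'" "closed_segment p' q' \<inter> interior W' \<noteq> {}"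
    for W' S' p' q'
  proof -
    obtain a b h where ab: "p' = (a, h)" "q' = (b, h)" using pq' by (metis prod.collapse)
    obtain u where u: "u \<in> interior W'" "u \<in> closed_segment p' q'" using ends'(3) by blast
    have "a \<noteq> b" using u ends'(1) ab by auto
    then consider "a < b" | "b < a" by linarith
    then show ?thesis
    proof cases
      case 1
      then show ?thesis using spans_meets_horizontal_segment[OF W' 1] ends' u ab by simp
    next
      case 2
      then show ?thesis using spans_meets_horizontal_segment[OF W' 2] ends' u ab
        by (simp add: closed_segment_commute)
    qed
  qed
  show ?thesis
  proof (cases "snd p = snd q")
    case True
    with horizontal assms show ?thesis by blast
  next
    case False
    have f: "axis_reflection prod.swap" by (simp add: axis_reflection_def)
    have "prod.swap ` S \<inter> closed_segment (prod.swap p) (prod.swap q) \<noteq> {}"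
      using False assms
      by (intro horizontal[of "prod.swap ` W"] axis_reflection_box_connected[OF f]
          axis_reflection_spans[OF f])
         (auto simp: axis_reflection_interior[OF f] axis_reflection_closed_segment[OF f, symmetric]
           axis_reflection_disjoint[OF f] axis_reflection_mem_image[OF f])
    then show ?thesis
      by (simp add: axis_reflection_closed_segment[OF f, symmetric] axis_reflection_disjoint[OF f])
  qed
qed

definition elbow_hv :: "pt \<Rightarrow> pt \<Rightarrow> pt set" where
  "elbow_hv p q = closed_segment p (fst q, snd p) \<union> closed_segment (fst q, snd p) q"

definition elbow_vh :: "pt \<Rightarrow> pt \<Rightarrow> pt set" where
  "elbow_vh p q = closed_segment p (fst p, snd q) \<union> closed_segment (fst p, snd q) q"

lemma elbow_vh_commute: "elbow_vh p q = elbow_hv q p"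
  by (auto simp: elbow_hv_def elbow_vh_def closed_segment_commute)

lemma swap_elbow_hv: "prod.swap ` elbow_hv p q = elbow_vh (prod.swap p) (prod.swap q)"
  by (simp add: elbow_hv_def elbow_vh_def image_Un axis_reflection_closed_segment
      axis_reflection_def)

lemma swap_elbow_vh: "prod.swap ` elbow_vh p q = elbow_hv (prod.swap p) (prod.swap q)"
  by (simp add: elbow_hv_def elbow_vh_def image_Un axis_reflection_closed_segment
      axis_reflection_def)

lemma apsnd_uminus_elbow_hv:
  "apsnd uminus ` elbow_hv p q = elbow_hv (apsnd uminus p) (apsnd uminus q)"
  by (simp add: elbow_hv_def image_Un axis_reflection_closed_segment axis_reflection_def)

lemma apsnd_uminus_elbow_vh:
  "apsnd uminus ` elbow_vh p q = elbow_vh (apsnd uminus p) (apsnd uminus q)"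
  by (simp add: elbow_vh_def image_Un axis_reflection_closed_segment axis_reflection_def)

lemma elbow_hv_separates:
  fixes W :: "pt set"
  assumes lt: "px < qx" "py < qy"
    and left: "(\<forall>z\<in>W. \<not> (fst z < px \<and> snd z < py)) \<or> (\<forall>z\<in>W. \<not> (fst z < px \<and> py < snd z))"
    and above: "(\<forall>z\<in>W. \<not> (fst z < qx \<and> qy < snd z)) \<or> (\<forall>z\<in>W. \<not> (qx < fst z \<and> qy < snd z))"
  obtains U V where "open U" "open V" "U \<inter> V \<inter> W = {}" "W - elbow_hv (px, py) (qx, qy) \<subseteq> U \<union> V"
    "{z. fst z < qx \<and> py < snd z} \<subseteq> U" "{z. snd z < py} \<subseteq> V"
    "(\<exists>z\<in>W. fst z < qx \<and> qy < snd z) \<Longrightarrow> {z. qy < snd z} \<subseteq> U"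
proof -
  define \<alpha> where "\<alpha> \<longleftrightarrow> (\<forall>z\<in>W. \<not> (fst z < px \<and> snd z < py))"
  define \<beta> where "\<beta> \<longleftrightarrow> (\<forall>z\<in>W. \<not> (qx < fst z \<and> qy < snd z))"
  define U where "U = {z::pt. (fst z < qx \<and> py < snd z) \<or> (\<alpha> \<and> fst z < px) \<or> (\<beta> \<and> qy < snd z)}"
  define V where
    "V = {z::pt. qx < fst z \<or> snd z < py \<or> (\<not> \<alpha> \<and> fst z < px) \<or> (\<not> \<beta> \<and> qy < snd z)}"
  have hv: "elbow_hv (px, py) (qx, qy) = closed_segment px qx \<times> {py} \<union> {qx} \<times> closed_segment py qy"
    by (simp add: elbow_hv_def closed_segment_horizontal closed_segment_vertical)
  show thesis
  proof (rule that[of U V])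
    show "open U" "open V" unfolding U_def V_def
      by (intro open_Collect_disj open_Collect_conj open_Collect_const open_Collect_less
          continuous_intros)+
    show "U \<inter> V \<inter> W = {}" using left above lt by (auto simp: U_def V_def \<alpha>_def \<beta>_def)
    show "W - elbow_hv (px, py) (qx, qy) \<subseteq> U \<union> V"
      by (auto simp: U_def V_def hv in_closed_segment_real)
    show "{z. fst z < qx \<and> py < snd z} \<subseteq> U" "{z. snd z < py} \<subseteq> V" by (auto simp: U_def V_def)
    show "{z. qy < snd z} \<subseteq> U" if "\<exists>z\<in>W. fst z < qx \<and> qy < snd z"
      using that above by (auto simp: U_def \<beta>_def)
  qed
qed

lemma spans_meets_elbow_interior_corner:
  assumes W: "box_connected W" and S: "spans S W"
    and lt: "px < qx" "py < qy" and ends: "(px, py) \<notin> interior W" "(qx, qy) \<notin> interior W"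
    and corner: "(qx, py) \<in> interior W"
    and vh: "elbow_vh (px, py) (qx, qy) \<inter> interior W \<noteq> {}"
  shows "S \<inter> elbow_hv (px, py) (qx, qy) \<noteq> {}"
proof -
  have "(\<forall>z\<in>W. \<not> (fst z < px \<and> snd z < py)) \<or> (\<forall>z\<in>W. \<not> (fst z < px \<and> py < snd z))"
    using quadrant_free_left[OF W corner, of "(px, py)"] ends lt by auto
  moreover have "(\<forall>z\<in>W. \<not> (fst z < qx \<and> qy < snd z)) \<or> (\<forall>z\<in>W. \<not> (qx < fst z \<and> qy < snd z))"
    using quadrant_free_above[OF W corner, of "(qx, qy)"] ends lt by auto
  ultimately obtain U V where UV: "open U" "open V" "U \<inter> V \<inter> W = {}"
    "W - elbow_hv (px, py) (qx, qy) \<subseteq> U \<union> V"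
    "{z. fst z < qx \<and> py < snd z} \<subseteq> U" "{z. snd z < py} \<subseteq> V"
    "(\<exists>z\<in>W. fst z < qx \<and> qy < snd z) \<Longrightarrow> {z. qy < snd z} \<subseteq> U"
    using elbow_hv_separates[OF lt] by blast
  obtain sB sT where sB: "sB \<in> S" "\<And>z. z \<in> W \<Longrightarrow> snd sB \<le> snd z"
    and sT: "sT \<in> S" "\<And>z. z \<in> W \<Longrightarrow> snd z \<le> snd sT"
    using S unfolding spans_def by blast
  have "S \<inter> U \<noteq> {} \<or> S \<inter> elbow_hv (px, py) (qx, qy) \<noteq> {}"
  proof (cases "(px, qy) \<in> interior W")
    case True
    then obtain e where e: "e > 0" "(px, qy + e) \<in> W"
      by (rule interior_vertical_neighbours) simp
    then have "sT \<in> U" using UV(7) sT(2)[OF e(2)] lt by force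
    then show ?thesis using sT(1) by blast
  next
    case False
    obtain w where w: "w \<in> elbow_vh (px, py) (qx, qy)" "w \<in> interior W" using vh by blast
    then consider "w \<in> closed_segment (px, py) (px, qy)" | "w \<in> closed_segment (px, qy) (qx, qy)"
      by (auto simp: elbow_vh_def)
    then show ?thesis
    proof cases
      case 1
      then have "S \<inter> closed_segment (px, py) (px, qy) \<noteq> {}"
        by (intro spans_meets_axis_segment[OF W S]) (use ends(1) False w(2) in auto)
      then obtain v where v: "v \<in> S" "v \<in> closed_segment (px, py) (px, qy)" by blast
      then have "fst v = px" "py \<le> snd v"
        using lt by (auto simp: closed_segment_vertical in_closed_segment_real mem_Times_iff)
      then have "v \<in> U \<or> v = (px, py)" using lt UV(5) by (auto simp: prod_eq_iff)
      then show ?thesis using v(1) by (auto simp: elbow_hv_def)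
    next
      case 2
      then have "S \<inter> closed_segment (px, qy) (qx, qy) \<noteq> {}"
        by (intro spans_meets_axis_segment[OF W S]) (use ends(2) False w(2) in auto)
      then obtain v where v: "v \<in> S" "v \<in> closed_segment (px, qy) (qx, qy)" by blast
      then have "snd v = qy" "fst v \<le> qx"
        using lt by (auto simp: closed_segment_horizontal in_closed_segment_real mem_Times_iff)
      then have "v \<in> U \<or> v = (qx, qy)" using lt UV(5) by (auto simp: prod_eq_iff)
      then show ?thesis using v(1) by (auto simp: elbow_hv_def)
    qed
  qed
  moreover have "S \<inter> V \<noteq> {}"
  proof -
    obtain e where "e > 0" "(qx, py - e) \<in> W"
      using corner by (rule interior_vertical_neighbours) simp
    then show ?thesis using sB UV(6) by force
  qed
  ultimately show ?thesis
    using connected_meets_separator[of S W U V] UV(1-4) S by (auto simp: spans_def)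
qed

lemma elbows_aligned:
  assumes "fst p = fst q \<or> snd p = snd q"
  shows "elbow_hv p q = closed_segment p q" "elbow_vh p q = closed_segment p q"
proof -
  have "(fst q, snd p) = p \<or> (fst q, snd p) = q" "(fst p, snd q) = p \<or> (fst p, snd q) = q"
    using assms by (auto simp: prod_eq_iff)
  then show "elbow_hv p q = closed_segment p q" "elbow_vh p q = closed_segment p q"
    by (auto simp: elbow_hv_def elbow_vh_def)
qed

lemma spans_meets_elbow_hv_increasing:
  assumes W: "box_connected W" and S: "spans S W"
    and lt: "fst p < fst q" "snd p < snd q" and ends: "p \<notin> interior W" "q \<notin> interior W"
    and hv: "elbow_hv p q \<inter> interior W \<noteq> {}" and vh: "elbow_vh p q \<inter> interior W \<noteq> {}"
  shows "S \<inter> elbow_hv p q \<noteq> {}"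
proof (cases "(fst q, snd p) \<in> interior W")
  case True
  then show ?thesis
    using spans_meets_elbow_interior_corner[OF W S lt] ends vh by simp
next
  case False
  obtain w where w: "w \<in> elbow_hv p q" "w \<in> interior W" using hv by blast
  then consider "w \<in> closed_segment p (fst q, snd p)" | "w \<in> closed_segment (fst q, snd p) q"
    by (auto simp: elbow_hv_def)
  then show ?thesis
  proof cases
    case 1
    then have "S \<inter> closed_segment p (fst q, snd p) \<noteq> {}"
      by (intro spans_meets_axis_segment[OF W S]) (use ends(1) False w(2) in auto)
    then show ?thesis by (auto simp: elbow_hv_def)
  next
    case 2
    then have "S \<inter> closed_segment (fst q, snd p) q \<noteq> {}"
      by (intro spans_meets_axis_segment[OF W S]) (use ends(2) False w(2) in auto)
    then show ?thesis by (auto simp: elbow_hv_def)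
  qed
qed

lemma spans_meets_elbows_increasing:
  assumes W: "box_connected W" and S: "spans S W"
    and lt: "fst p < fst q" "snd p < snd q" and ends: "p \<notin> interior W" "q \<notin> interior W"
    and hv: "elbow_hv p q \<inter> interior W \<noteq> {}" and vh: "elbow_vh p q \<inter> interior W \<noteq> {}"
  shows "S \<inter> elbow_hv p q \<noteq> {} \<and> S \<inter> elbow_vh p q \<noteq> {}"
proof
  show "S \<inter> elbow_hv p q \<noteq> {}" by (rule spans_meets_elbow_hv_increasing[OF assms])
  have f: "axis_reflection prod.swap" by (simp add: axis_reflection_def)
  have "prod.swap ` S \<inter> elbow_hv (prod.swap p) (prod.swap q) \<noteq> {}"
    using lt ends hv vh
    by (intro spans_meets_elbow_hv_increasing[of "prod.swap ` W"]
          axis_reflection_box_connected[OF f W] axis_reflection_spans[OF f S])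
       (auto simp: axis_reflection_interior[OF f] axis_reflection_mem_image[OF f]
          swap_elbow_hv [symmetric] swap_elbow_vh [symmetric] axis_reflection_disjoint[OF f])
  then show "S \<inter> elbow_vh p q \<noteq> {}"
    by (simp add: swap_elbow_vh [symmetric] axis_reflection_disjoint[OF f])
qed

lemma spans_meets_elbows:
  assumes W: "box_connected W" and S: "spans S W"
    and ends: "p \<notin> interior W" "q \<notin> interior W"
    and hv: "elbow_hv p q \<inter> interior W \<noteq> {}" and vh: "elbow_vh p q \<inter> interior W \<noteq> {}"
  shows "S \<inter> elbow_hv p q \<noteq> {} \<and> S \<inter> elbow_vh p q \<noteq> {}"
proof -
  have rightwards: "S \<inter> elbow_hv p q \<noteq> {} \<and> S \<inter> elbow_vh p q \<noteq> {}"
    if "fst p < fst q" "snd p \<noteq> snd q" "p \<notin> interior W" "q \<notin> interior W"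
      "elbow_hv p q \<inter> interior W \<noteq> {}" "elbow_vh p q \<inter> interior W \<noteq> {}" for p q
  proof (cases "snd p < snd q")
    case True
    with that show ?thesis by (intro spans_meets_elbows_increasing[OF W S]) auto
  next
    case False
    have f: "axis_reflection (apsnd uminus)" by (simp add: axis_reflection_def)
    have "apsnd uminus ` S \<inter> elbow_hv (apsnd uminus p) (apsnd uminus q) \<noteq> {} \<and>
        apsnd uminus ` S \<inter> elbow_vh (apsnd uminus p) (apsnd uminus q) \<noteq> {}"
      using that False
      by (intro spans_meets_elbows_increasing[of "apsnd uminus ` W"]
            axis_reflection_box_connected[OF f W] axis_reflection_spans[OF f S])
         (auto simp: axis_reflection_interior[OF f] axis_reflection_mem_image[OF f]
           axis_reflection_involutive[OF f] apsnd_uminus_elbow_hv [symmetric]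
           apsnd_uminus_elbow_vh [symmetric] axis_reflection_disjoint[OF f])
    then show ?thesis
      by (simp add: apsnd_uminus_elbow_hv [symmetric] apsnd_uminus_elbow_vh [symmetric]
          axis_reflection_disjoint[OF f])
  qed
  consider "fst p = fst q \<or> snd p = snd q"
    | "fst p < fst q" "snd p \<noteq> snd q"
    | "fst q < fst p" "snd p \<noteq> snd q"
    by linarith
  then show ?thesis
  proof cases
    case 1
    then show ?thesis using spans_meets_axis_segment[OF W S 1 ends] hv by (simp add: elbows_aligned)
  next
    case 2
    then show ?thesis using rightwards ends hv vh by blast
  next
    case 3
    then show ?thesis using rightwards[of q p] ends hv vh by (auto simp: elbow_vh_commute)
  qed
qed

section \<open>Shortest rectilinear paths\<close>

lemma path_len_Cons2: "path_len (a # b # r) = l1_dist a b + path_len (b # r)"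
  unfolding path_len_def length_Cons diff_Suc_1 sum.lessThan_Suc_shift by simp

lemma path_len_singleton [simp]: "path_len [a] = 0"
  by (simp add: path_len_def)

lemma path_set_singleton [simp]: "path_set [a] = {a}"
  by (simp add: path_set_def)

lemma path_set_Cons2: "path_set (a # b # r) = closed_segment a b \<union> path_set (b # r)"
proof -
  have "(\<Union>i<length (a # b # r) - 1. closed_segment ((a # b # r) ! i) ((a # b # r) ! Suc i)) =
      closed_segment a b \<union>
      (\<Union>i<length (b # r) - 1. closed_segment ((b # r) ! i) ((b # r) ! Suc i))"
    by (simp add: lessThan_Suc_eq_insert_0 UN_insert image_iff)
  then show ?thesis unfolding path_set_def by auto
qed

lemma hd_in_path_set: "ps \<noteq> [] \<Longrightarrow> hd ps \<in> path_set ps"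
  by (simp add: path_set_def)

lemma last_in_path_set: "ps \<noteq> [] \<Longrightarrow> last ps \<in> path_set ps"
  by (simp add: path_set_def)

lemma rect_path_singleton [simp]: "rect_path [a]"
  by (simp add: rect_path_def)

lemma rect_path_Cons2: "rect_path (a # b # r) \<longleftrightarrow> (fst a = fst b \<or> snd a = snd b) \<and> rect_path (b # r)"
  unfolding rect_path_def length_Cons diff_Suc_1 All_less_Suc2 by simp

lemma setcompr_less_Suc:
  "{f i |i. i < Suc n \<and> P i} = (if P 0 then {f 0} else {}) \<union> {f (Suc i) |i. i < n \<and> P (Suc i)}"
  by (auto simp: less_Suc_eq_0_disj)

lemma horiz_segs_singleton [simp]: "horiz_segs [a] = {}"
  by (simp add: horiz_segs_def)

lemma vert_segs_singleton [simp]: "vert_segs [a] = {}"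
  by (simp add: vert_segs_def)

lemma horiz_segs_Cons2: "horiz_segs (a # b # r) =
   (if snd a = snd b \<and> fst a \<noteq> fst b then {closed_segment a b} else {}) \<union> horiz_segs (b # r)"
  unfolding horiz_segs_def length_Cons diff_Suc_1 setcompr_less_Suc by (simp del: closed_segment_eq)

lemma vert_segs_Cons2: "vert_segs (a # b # r) =
   (if fst a = fst b \<and> snd a \<noteq> snd b then {closed_segment a b} else {}) \<union> vert_segs (b # r)"
  unfolding vert_segs_def length_Cons diff_Suc_1 setcompr_less_Suc by (simp del: closed_segment_eq)

lemma corner_points_Cons2_mono: "corner_points (b # r) \<subseteq> corner_points (a # b # r)"
  unfolding corner_points_def by (auto simp: horiz_segs_Cons2 vert_segs_Cons2)

lemma connected_path_set: "ps \<noteq> [] \<Longrightarrow> connected (path_set ps)"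
proof (induction ps rule: induct_list012)
  case (3 a b r)
  have "b \<in> closed_segment a b \<inter> path_set (b # r)"
    by (simp add: hd_in_path_set[of "b # r", simplified])
  then show ?case
    using "3.IH"(2) by (auto simp: path_set_Cons2 intro!: connected_Un connected_segment)
qed simp_all

lemma l1_dist_triangle: "l1_dist a c \<le> l1_dist a b + l1_dist b c"
  unfolding l1_dist_def by linarith

lemma l1_dist_eq_imp_between:
  assumes "l1_dist a b + l1_dist b c = l1_dist a c"
  shows "fst b \<in> closed_segment (fst a) (fst c)" "snd b \<in> closed_segment (snd a) (snd c)"
  using assms unfolding l1_dist_def in_closed_segment_real by (auto simp: abs_if split: if_splits)

lemma l1_dist_le_path_len: "ps \<noteq> [] \<Longrightarrow> l1_dist (hd ps) (last ps) \<le> path_len ps"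
proof (induction ps rule: induct_list012)
  case (3 a b r)
  then show ?case
    using l1_dist_triangle[where a = a and b = b and c = "last (b # r)"]
    by (simp add: path_len_Cons2)
qed (simp_all add: path_len_def l1_dist_def)

lemma tight_path_Cons2:
  assumes "path_len (a # b # r) = l1_dist a (last (b # r))"
  shows "path_len (b # r) = l1_dist b (last (b # r))"
    and "l1_dist a b + l1_dist b (last (b # r)) = l1_dist a (last (b # r))"
  using assms l1_dist_le_path_len[of "b # r"]
    l1_dist_triangle[where a = a and b = b and c = "last (b # r)"]
  by (auto simp: path_len_Cons2)

lemma rbox_subset_rbox:
  assumes "b \<in> rbox a c"
  shows "rbox a b \<subseteq> rbox a c" "rbox b c \<subseteq> rbox a c"
  using assms by (auto simp: rbox_def mem_Times_iff in_closed_segment_real)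

lemma tight_path_set_subset_rbox:
  "ps \<noteq> [] \<Longrightarrow> path_len ps = l1_dist (hd ps) (last ps) \<Longrightarrow> path_set ps \<subseteq> rbox (hd ps) (last ps)"
proof (induction ps rule: induct_list012)
  case (2 x)
  then show ?case by (simp add: rbox_def)
next
  case (3 a b r)
  let ?q = "last (b # r)"
  have "path_len (a # b # r) = l1_dist a ?q" using "3.prems"(2) by simp
  note tight = tight_path_Cons2[OF this]
  have "b \<in> rbox a ?q"
    using l1_dist_eq_imp_between[OF tight(2)] by (simp add: rbox_def mem_Times_iff)
  then have "closed_segment a b \<subseteq> rbox a ?q" "rbox b ?q \<subseteq> rbox a ?q"
    using closed_segment_subset_rbox rbox_subset_rbox by blast+
  then show ?case using "3.IH"(2) tight(1) by (auto simp: path_set_Cons2)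
qed simp

lemma elbow_list_hv:
  "rect_path [p, (fst q, snd p), q]" "path_len [p, (fst q, snd p), q] = l1_dist p q"
  "path_set [p, (fst q, snd p), q] = elbow_hv p q"
  by (auto simp: rect_path_Cons2 path_len_Cons2 l1_dist_def path_set_Cons2 elbow_hv_def)

lemma elbow_list_vh:
  "rect_path [p, (fst p, snd q), q]" "path_len [p, (fst p, snd q), q] = l1_dist p q"
  "path_set [p, (fst p, snd q), q] = elbow_vh p q"
  by (auto simp: rect_path_Cons2 path_len_Cons2 l1_dist_def path_set_Cons2 elbow_vh_def)

lemma shortest_rect_path_iff:
  "shortest_rect_path p q ps \<longleftrightarrow> rect_path_between p q ps \<and> path_len ps = l1_dist p q"
proof
  assume "shortest_rect_path p q ps"
  then have "rect_path_between p q ps" "path_len ps \<le> path_len [p, (fst q, snd p), q]"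
    using elbow_list_hv(1) by (auto simp: shortest_rect_path_def rect_path_between_def)
  moreover have "l1_dist p q \<le> path_len ps"
    using \<open>rect_path_between p q ps\<close> l1_dist_le_path_len
    by (fastforce simp: rect_path_between_def rect_path_def)
  ultimately show "rect_path_between p q ps \<and> path_len ps = l1_dist p q"
    using elbow_list_hv(2)[of p q] by linarith
next
  assume "rect_path_between p q ps \<and> path_len ps = l1_dist p q"
  then show "shortest_rect_path p q ps"
    unfolding shortest_rect_path_def rect_path_between_def using l1_dist_le_path_len
    by (metis rect_path_def)
qed

lemma rectilinearly_convex_imp_box_connected:
  assumes "rectilinearly_convex W"
  shows "box_connected W"
  unfolding box_connected_def
proof (intro ballI)
  fix a b assume "a \<in> W" "b \<in> W"
  then obtain ps where ps: "shortest_rect_path a b ps" "path_set ps \<subseteq> W"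
    using assms unfolding rectilinearly_convex_def by blast
  then have "ps \<noteq> []" "hd ps = a" "last ps = b" "path_len ps = l1_dist a b"
    by (auto simp: shortest_rect_path_iff rect_path_between_def rect_path_def)
  then show "\<exists>P\<subseteq>W \<inter> rbox a b. connected P \<and> a \<in> P \<and> b \<in> P"
    using ps(2) tight_path_set_subset_rbox[of ps] connected_path_set[of ps]
      hd_in_path_set[of ps] last_in_path_set[of ps]
    by (intro exI[of _ "path_set ps"]) auto
qed

lemma snd_const_on_horiz_seg:
  assumes "h \<in> horiz_segs ps" "z \<in> h" "w \<in> h"
  shows "snd z = snd w"
proof -
  obtain a b where "h = closed_segment a b" "snd a = snd b"
    using assms(1) unfolding horiz_segs_def by blast
  then show ?thesis
    using snd_eq_on_closed_segment[of a b z] snd_eq_on_closed_segment[of a b w] assms(2,3) by simp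
qed

lemma fst_const_on_vert_seg:
  assumes "v \<in> vert_segs ps" "z \<in> v" "w \<in> v"
  shows "fst z = fst w"
proof -
  obtain a b where "v = closed_segment a b" "fst a = fst b"
    using assms(1) unfolding vert_segs_def by blast
  then show ?thesis
    using fst_eq_on_closed_segment[of a b z] fst_eq_on_closed_segment[of a b w] assms(2,3) by simp
qed

lemma corner_points_three: "corner_points [a, b, c] \<subseteq> {b}"
proof
  fix x assume "x \<in> corner_points [a, b, c]"
  then obtain h v where hv: "h \<in> horiz_segs [a, b, c]" "v \<in> vert_segs [a, b, c]" "x \<in> h" "x \<in> v"
    unfolding corner_points_def by blast
  moreover have "b \<in> h" "b \<in> v"
    using hv(1,2) by (auto simp: horiz_segs_Cons2 vert_segs_Cons2 split: if_splits)
  ultimately have "snd x = snd b" "fst x = fst b"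
    using snd_const_on_horiz_seg fst_const_on_vert_seg by blast+
  then show "x \<in> {b}" by (simp add: prod_eq_iff)
qed

lemma elbow_list_hv_shortest:
  "shortest_rect_path p q [p, (fst q, snd p), q]" "at_most_one_corner [p, (fst q, snd p), q]"
  using elbow_list_hv[of p q] corner_points_three[of p "(fst q, snd p)" q]
  unfolding shortest_rect_path_iff rect_path_between_def at_most_one_corner_def by auto

lemma elbow_list_vh_shortest:
  "shortest_rect_path p q [p, (fst p, snd q), q]" "at_most_one_corner [p, (fst p, snd q), q]"
  using elbow_list_vh[of p q] corner_points_three[of p "(fst p, snd q)" q]
  unfolding shortest_rect_path_iff rect_path_between_def at_most_one_corner_def by auto

text \<open>The corner conditions make the invariant inductive: prepending a segment perpendicular to the
  first leg creates a second corner point.\<close>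
definition covers_elbow :: "pt \<Rightarrow> pt \<Rightarrow> pt list \<Rightarrow> bool" where
  "covers_elbow h q ps \<longleftrightarrow> h = q \<or>
     (fst h \<noteq> fst q \<and> elbow_hv h q \<subseteq> path_set ps \<and> h \<in> \<Union>(horiz_segs ps) \<and>
        (snd h \<noteq> snd q \<longrightarrow> (fst q, snd h) \<in> corner_points ps)) \<or>
     (snd h \<noteq> snd q \<and> elbow_vh h q \<subseteq> path_set ps \<and> h \<in> \<Union>(vert_segs ps) \<and>
        (fst h \<noteq> fst q \<longrightarrow> (fst h, snd q) \<in> corner_points ps))"

lemma covers_elbow_Cons_horizontal:
  assumes IH: "covers_elbow b q (b # r)" and ab: "snd a = snd b" "fst a \<noteq> fst b"
    and between: "fst b \<in> closed_segment (fst a) (fst q)"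
    and corners: "corner_points (a # b # r) \<subseteq> {c}"
  shows "covers_elbow a q (a # b # r)"
proof -
  have P: "path_set (a # b # r) = closed_segment a b \<union> path_set (b # r)" by (rule path_set_Cons2)
  have H: "closed_segment a b \<in> horiz_segs (a # b # r)" using ab by (simp add: horiz_segs_Cons2)
  have V: "vert_segs (b # r) \<subseteq> vert_segs (a # b # r)" by (auto simp: vert_segs_Cons2)
  note C = corner_points_Cons2_mono[of b r a]
  have aq: "fst a \<noteq> fst q" using between ab(2) by (auto simp: in_closed_segment_real)
  have m: "(fst q, snd a) = (fst q, snd b)" using ab by simp
  have "b \<in> closed_segment (fst a, snd a) (fst q, snd a)"
    using between ab(1) by (simp add: closed_segment_horizontal mem_Times_iff)
  then have "b \<in> closed_segment a (fst q, snd b)" using ab(1) by (metis prod.collapse)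
  then have "closed_segment a (fst q, snd b) = closed_segment a b \<union> closed_segment b (fst q, snd b)"
    by (simp add: Un_closed_segment)
  then have elbow_split: "elbow_hv a q = closed_segment a b \<union> elbow_hv b q"
    unfolding elbow_hv_def m by blast
  have "elbow_hv a q \<subseteq> path_set (a # b # r) \<and>
      (snd a \<noteq> snd q \<longrightarrow> (fst q, snd a) \<in> corner_points (a # b # r))"
    using IH unfolding covers_elbow_def
  proof (elim disjE conjE)
    assume "b = q"
    then show ?thesis using ab P by (auto simp: elbow_hv_def)
  next
    assume "elbow_hv b q \<subseteq> path_set (b # r)"
      "snd b \<noteq> snd q \<longrightarrow> (fst q, snd b) \<in> corner_points (b # r)"
    then show ?thesis using C ab(1) P elbow_split by auto
  next
    assume vh: "snd b \<noteq> snd q" "elbow_vh b q \<subseteq> path_set (b # r)" "b \<in> \<Union>(vert_segs (b # r))"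
      "fst b \<noteq> fst q \<longrightarrow> (fst b, snd q) \<in> corner_points (b # r)"
    have b: "b \<in> corner_points (a # b # r)" using H V vh(3) unfolding corner_points_def by blast
    have "fst b = fst q"
    proof (rule ccontr)
      assume "fst b \<noteq> fst q"
      then have "(fst b, snd q) \<in> corner_points (a # b # r)" using vh(4) C by blast
      with b corners have "b = (fst b, snd q)" by blast
      with vh(1) show False by (metis snd_conv)
    qed
    then have "(fst q, snd a) = b" "(fst b, snd q) = q" using ab(1) by (simp_all add: prod_eq_iff)
    then have "elbow_hv a q = closed_segment a b \<union> closed_segment b q"
      "closed_segment b q \<subseteq> elbow_vh b q"
      by (auto simp: elbow_hv_def elbow_vh_def)
    then show ?thesis using vh(2) b P \<open>(fst q, snd a) = b\<close> by auto
  qed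
  moreover have "a \<in> \<Union>(horiz_segs (a # b # r))" using H by blast
  ultimately show ?thesis using aq unfolding covers_elbow_def by blast
qed

lemma covers_elbow_Cons_vertical:
  assumes IH: "covers_elbow b q (b # r)" and ab: "fst a = fst b" "snd a \<noteq> snd b"
    and between: "snd b \<in> closed_segment (snd a) (snd q)"
    and corners: "corner_points (a # b # r) \<subseteq> {c}"
  shows "covers_elbow a q (a # b # r)"
proof -
  have P: "path_set (a # b # r) = closed_segment a b \<union> path_set (b # r)" by (rule path_set_Cons2)
  have V: "closed_segment a b \<in> vert_segs (a # b # r)" using ab by (simp add: vert_segs_Cons2)
  have H: "horiz_segs (b # r) \<subseteq> horiz_segs (a # b # r)" by (auto simp: horiz_segs_Cons2)
  note C = corner_points_Cons2_mono[of b r a]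
  have aq: "snd a \<noteq> snd q" using between ab(2) by (auto simp: in_closed_segment_real)
  have m: "(fst a, snd q) = (fst b, snd q)" using ab by simp
  have "b \<in> closed_segment (fst a, snd a) (fst a, snd q)"
    using between ab(1) by (simp add: closed_segment_vertical mem_Times_iff)
  then have "b \<in> closed_segment a (fst b, snd q)" using ab(1) by (metis prod.collapse)
  then have "closed_segment a (fst b, snd q) = closed_segment a b \<union> closed_segment b (fst b, snd q)"
    by (simp add: Un_closed_segment)
  then have elbow_split: "elbow_vh a q = closed_segment a b \<union> elbow_vh b q"
    unfolding elbow_vh_def m by blast
  have "elbow_vh a q \<subseteq> path_set (a # b # r) \<and>
      (fst a \<noteq> fst q \<longrightarrow> (fst a, snd q) \<in> corner_points (a # b # r))"
    using IH unfolding covers_elbow_def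
  proof (elim disjE conjE)
    assume "b = q"
    then show ?thesis using ab P by (auto simp: elbow_vh_def)
  next
    assume hv: "fst b \<noteq> fst q" "elbow_hv b q \<subseteq> path_set (b # r)" "b \<in> \<Union>(horiz_segs (b # r))"
      "snd b \<noteq> snd q \<longrightarrow> (fst q, snd b) \<in> corner_points (b # r)"
    have b: "b \<in> corner_points (a # b # r)" using H V hv(3) unfolding corner_points_def by blast
    have "snd b = snd q"
    proof (rule ccontr)
      assume "snd b \<noteq> snd q"
      then have "(fst q, snd b) \<in> corner_points (a # b # r)" using hv(4) C by blast
      with b corners have "b = (fst q, snd b)" by blast
      with hv(1) show False by (metis fst_conv)
    qed
    then have "(fst a, snd q) = b" "(fst q, snd b) = q" using ab(1) by (simp_all add: prod_eq_iff)
    then have "elbow_vh a q = closed_segment a b \<union> closed_segment b q"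
      "closed_segment b q \<subseteq> elbow_hv b q"
      by (auto simp: elbow_hv_def elbow_vh_def)
    then show ?thesis using hv(2) b P \<open>(fst a, snd q) = b\<close> by auto
  next
    assume "elbow_vh b q \<subseteq> path_set (b # r)"
      "fst b \<noteq> fst q \<longrightarrow> (fst b, snd q) \<in> corner_points (b # r)"
    then show ?thesis using C ab(1) P elbow_split by auto
  qed
  moreover have "a \<in> \<Union>(vert_segs (a # b # r))" using V by blast
  ultimately show ?thesis using aq unfolding covers_elbow_def by blast
qed

lemma tight_path_covers_elbow:
  assumes "rect_path ps" "path_len ps = l1_dist (hd ps) (last ps)" "corner_points ps \<subseteq> {c}"
  shows "covers_elbow (hd ps) (last ps) ps"
  using assms
proof (induction ps rule: induct_list012)
  case 1
  then show ?case by (simp add: rect_path_def)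
next
  case (2 x)
  then show ?case by (simp add: covers_elbow_def)
next
  case (3 a b r)
  let ?q = "last (b # r)"
  have "path_len (a # b # r) = l1_dist a ?q" using "3.prems"(2) by simp
  note tight = tight_path_Cons2[OF this]
  have step: "fst a = fst b \<or> snd a = snd b" "rect_path (b # r)"
    using "3.prems"(1) by (simp_all add: rect_path_Cons2)
  have IH: "covers_elbow b ?q (b # r)"
    using "3.IH"(2)[OF step(2)] tight(1) "3.prems"(3) corner_points_Cons2_mono[of b r a] by simp
  note between = l1_dist_eq_imp_between[OF tight(2)]
  consider "a = b" | "snd a = snd b" "fst a \<noteq> fst b" | "fst a = fst b" "snd a \<noteq> snd b"
    using step(1) by (metis prod_eqI)
  then have "covers_elbow a ?q (a # b # r)"
  proof cases
    case 1
    have "path_set (a # b # r) = path_set (b # r)"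
      using 1 hd_in_path_set[of "b # r"] by (auto simp: path_set_Cons2)
    moreover have "horiz_segs (a # b # r) = horiz_segs (b # r)"
      "vert_segs (a # b # r) = vert_segs (b # r)"
      using 1 by (simp_all add: horiz_segs_Cons2 vert_segs_Cons2)
    ultimately show ?thesis using IH 1 by (simp add: covers_elbow_def corner_points_def)
  next
    case 2
    then show ?thesis using covers_elbow_Cons_horizontal IH between(1) "3.prems"(3) by blast
  next
    case 3
    then show ?thesis using covers_elbow_Cons_vertical IH between(2) "3.prems"(3) by blast
  qed
  then show ?case by simp
qed

lemma shortest_one_corner_path_covers_elbow:
  assumes "shortest_rect_path p q ps" "at_most_one_corner ps"
  shows "elbow_hv p q \<subseteq> path_set ps \<or> elbow_vh p q \<subseteq> path_set ps"
proof -
  have ps: "rect_path ps" "hd ps = p" "last ps = q" "path_len ps = l1_dist p q" "ps \<noteq> []"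
    using assms(1) by (auto simp: shortest_rect_path_iff rect_path_between_def rect_path_def)
  obtain c where "corner_points ps \<subseteq> {c}" using assms(2) unfolding at_most_one_corner_def by blast
  then have "covers_elbow p q ps" using tight_path_covers_elbow[of ps c] ps by simp
  moreover have "elbow_hv p p \<subseteq> path_set ps"
    using hd_in_path_set[OF ps(5)] ps(2) by (simp add: elbow_hv_def)
  ultimately show ?thesis unfolding covers_elbow_def by blast
qed

section \<open>Rectilinear polygons\<close>

lemma collinear_fst_eq: "fst a = fst b \<Longrightarrow> fst b = fst c \<Longrightarrow> collinear {a, b, c :: pt}"
  unfolding collinear_def
  by (rule exI[of _ "(0, 1)"]) (auto intro!: exI[of _ "snd _ - snd _"] simp: prod_eq_iff)

lemma collinear_snd_eq: "snd a = snd b \<Longrightarrow> snd b = snd c \<Longrightarrow> collinear {a, b, c :: pt}"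
  unfolding collinear_def
  by (rule exI[of _ "(1, 0)"]) (auto intro!: exI[of _ "fst _ - fst _"] simp: prod_eq_iff)

lemma vertex_on_aligned_edge:
  fixes g h :: "pt \<Rightarrow> real"
  assumes n: "3 \<le> length vs" and dist: "distinct vs" and i: "i < length vs"
    and rect: "\<forall>k<length vs. g (vs ! k) = g (vs ! ((k + 1) mod length vs)) \<or>
                                h (vs ! k) = h (vs ! ((k + 1) mod length vs))"
    and no3: "\<And>a b c. a \<in> set vs \<Longrightarrow> b \<in> set vs \<Longrightarrow> c \<in> set vs \<Longrightarrow> a \<noteq> b \<Longrightarrow> b \<noteq> c \<Longrightarrow> a \<noteq> c \<Longrightarrow>
      h a = h b \<Longrightarrow> h b = h c \<Longrightarrow> False"
  obtains k where "k < length vs" "g (vs ! k) = g (vs ! i)"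
    "g (vs ! ((k + 1) mod length vs)) = g (vs ! i)"
proof -
  define m where "m = length vs"
  define j where "j = (if i = 0 then m - 1 else i - 1)"
  define i' where "i' = (i + 1) mod m"
  have jm: "j < m" "(j + 1) mod m = i"
    using i n by (auto simp: j_def m_def)
  have i'm: "i' < m"
    using n unfolding i'_def m_def by (intro mod_less_divisor) linarith
  have distinct_idx: "i \<noteq> j" "i \<noteq> i'" "j \<noteq> i'"
    using i n by (auto simp: j_def i'_def m_def mod_Suc)
  show thesis
  proof (cases "g (vs ! i) = g (vs ! i') \<or> g (vs ! j) = g (vs ! i)")
    case True
    then show thesis using that[of i] that[of j] i jm by (auto simp: i'_def m_def)
  next
    case False
    then have "h (vs ! i) = h (vs ! i')" "h (vs ! j) = h (vs ! i)"
      using rect i jm by (auto simp: i'_def m_def)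
    moreover have "vs ! j \<noteq> vs ! i" "vs ! i \<noteq> vs ! i'" "vs ! j \<noteq> vs ! i'"
      using distinct_idx dist jm i i'm by (auto simp: nth_eq_iff_index_eq m_def)
    ultimately show thesis using no3[of "vs ! j" "vs ! i" "vs ! i'"] jm i i'm by (auto simp: m_def)
  qed
qed

lemma poly_edge_subset_region: "k < length vs \<Longrightarrow> poly_edge vs k \<subseteq> poly_region vs"
  unfolding poly_region_def poly_boundary_def poly_edges_def by blast

lemma vertex_in_poly_region: "k < length vs \<Longrightarrow> vs ! k \<in> poly_region vs"
  using poly_edge_subset_region[of k vs] by (auto simp: poly_edge_def)

lemma poly_region_subset_vertex_box:
  fixes vs :: "pt list"
  assumes "vs \<noteq> []"
  defines "K \<equiv> {Min (fst ` set vs)..Max (fst ` set vs)} \<times> {Min (snd ` set vs)..Max (snd ` set vs)}"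
  shows "poly_region vs \<subseteq> K"
proof -
  have vK: "v \<in> K" if "v \<in> set vs" for v
    using that unfolding K_def by (auto intro: Min_le Max_ge simp: mem_Times_iff)
  have cK: "convex K" unfolding K_def by (intro convex_Times convex_real_interval)
  have "poly_edge vs k \<subseteq> K" if "k < length vs" for k
    unfolding poly_edge_def using that assms by (intro closed_segment_subset vK cK) auto
  then have bK: "poly_boundary vs \<subseteq> K"
    unfolding poly_boundary_def poly_edges_def by blast
  then have "inside (poly_boundary vs) \<subseteq> K"
    using inside_mono[OF bK] inside_convex[OF cK] by blast
  with bK show ?thesis by (simp add: poly_region_def)
qed

lemma bounding_box_poly_region:
  fixes vs :: "pt list"
  assumes "vs \<noteq> []"
  shows "bounding_box (poly_region vs) =
    {Min (fst ` set vs)..Max (fst ` set vs)} \<times> {Min (snd ` set vs)..Max (snd ` set vs)}"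
proof -
  let ?W = "poly_region vs"
  note WK = poly_region_subset_vertex_box[OF assms]
  have vW: "set vs \<subseteq> ?W" using vertex_in_poly_region by (metis in_set_conv_nth subsetI)
  have extremes: "Inf (g ` ?W) = Min (g ` set vs) \<and> Sup (g ` ?W) = Max (g ` set vs)"
    if g: "g = fst \<or> g = snd" for g :: "pt \<Rightarrow> real"
  proof -
    have bounds: "Min (g ` set vs) \<le> g z \<and> g z \<le> Max (g ` set vs)" if "z \<in> ?W" for z
      using WK that g by (auto simp: mem_Times_iff)
    have "Min (g ` set vs) \<in> g ` set vs" "Max (g ` set vs) \<in> g ` set vs"
      using assms by (simp_all add: Min_in Max_in)
    then have "Min (g ` set vs) \<in> g ` ?W" "Max (g ` set vs) \<in> g ` ?W"
      using vW by blast+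
    then show ?thesis
      using bounds by (intro conjI cInf_eq_minimum cSup_eq_maximum) blast+
  qed
  have "Inf (fst ` ?W) = Min (fst ` set vs)" "Sup (fst ` ?W) = Max (fst ` set vs)"
    "Inf (snd ` ?W) = Min (snd ` set vs)" "Sup (snd ` ?W) = Max (snd ` set vs)"
    using extremes[of fst] extremes[of snd] by simp_all
  then show ?thesis by (auto simp: bounding_box_def)
qed

lemma mem_frontier_box:
  fixes z :: pt
  assumes "z \<in> {a..b} \<times> {c..d}" "fst z = a \<or> fst z = b \<or> snd z = c \<or> snd z = d"
  shows "z \<in> frontier ({a..b} \<times> {c..d})"
proof -
  have "closed ({a..b} \<times> {c..d})" by (intro closed_Times closed_real_atLeastAtMost)
  moreover have "interior ({a..b} \<times> {c..d}) = {a<..<b} \<times> {c<..<d}" by (simp add: interior_Times)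
  ultimately show ?thesis using assms unfolding frontier_def by (auto simp: mem_Times_iff)
qed

lemma polygon_spans:
  assumes sp: "simple_polygon vs" and gp: "general_position vs" and rl: "rectilinear_polygon vs"
    and SW: "\<Union>S \<subseteq> poly_region vs" and ext: "\<forall>e\<in>extreme_edges vs. \<exists>s\<in>S. s \<inter> e \<noteq> {}"
    and conn: "connected (\<Union>S)"
  shows "spans (\<Union>S) (poly_region vs)"
proof -
  let ?W = "poly_region vs" and ?n = "length vs"
  define K where
    "K = {Min (fst ` set vs)..Max (fst ` set vs)} \<times> {Min (snd ` set vs)..Max (snd ` set vs)}"
  have n: "3 \<le> ?n" and dist: "distinct vs" using sp by (auto simp: simple_polygon_def)
  then have ne: "vs \<noteq> []" by auto
  have WK: "?W \<subseteq> K" using poly_region_subset_vertex_box[OF ne] by (simp add: K_def)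
  have BB: "bounding_box ?W = K" using bounding_box_poly_region[OF ne] by (simp add: K_def)
  have no3: "False" if "a \<in> set vs" "b \<in> set vs" "c \<in> set vs" "a \<noteq> b" "b \<noteq> c" "a \<noteq> c"
    "h a = h b" "h b = h c" "h = fst \<or> h = snd" for a b c and h :: "pt \<Rightarrow> real"
    using gp that collinear_fst_eq[of a b c] collinear_snd_eq[of a b c]
    unfolding general_position_def by blast
  have rect:
    "\<forall>k<?n. g (vs ! k) = g (vs ! ((k + 1) mod ?n)) \<or> h (vs ! k) = h (vs ! ((k + 1) mod ?n))"
    if "g = fst \<and> h = snd \<or> g = snd \<and> h = fst" for g h :: "pt \<Rightarrow> real"
    using rl that unfolding rectilinear_polygon_def by blast
  have touches: "\<exists>s\<in>\<Union>S. g s = m"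
    if gh: "g = fst \<and> h = snd \<or> g = snd \<and> h = fst"
      and m: "m = Min (g ` set vs) \<or> m = Max (g ` set vs)"
    for g h :: "pt \<Rightarrow> real" and m
  proof -
    have "m \<in> g ` set vs" using m ne by (auto intro: Min_in Max_in)
    then obtain i where i: "i < ?n" "g (vs ! i) = m" by (auto simp: in_set_conv_nth)
    obtain k where k: "k < ?n" "g (vs ! k) = m" "g (vs ! ((k + 1) mod ?n)) = m"
      using vertex_on_aligned_edge[OF n dist i(1) rect[OF gh], of thesis] no3[of _ _ _ h] gh i(2)
      by blast
    have on_line: "g z = m" if "z \<in> poly_edge vs k" for z
      using that k gh fst_eq_on_closed_segment snd_eq_on_closed_segment
      unfolding poly_edge_def by metis
    have "poly_edge vs k \<subseteq> frontier (bounding_box ?W)"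
    proof
      fix z assume z: "z \<in> poly_edge vs k"
      then have "z \<in> K" using poly_edge_subset_region[OF k(1)] WK by blast
      then show "z \<in> frontier (bounding_box ?W)"
        unfolding BB K_def using on_line[OF z] gh m by (intro mem_frontier_box) auto
    qed
    then have "poly_edge vs k \<in> extreme_edges vs"
      using k(1) by (auto simp: extreme_edges_def poly_edges_def)
    then obtain s z where "s \<in> S" "z \<in> s" "z \<in> poly_edge vs k" using ext by blast
    then show ?thesis using on_line by blast
  qed
  have extremes: "(\<exists>s\<in>\<Union>S. \<forall>z\<in>?W. g s \<le> g z) \<and> (\<exists>s\<in>\<Union>S. \<forall>z\<in>?W. g z \<le> g s)"
    if gh: "g = fst \<and> h = snd \<or> g = snd \<and> h = fst" for g h :: "pt \<Rightarrow> real"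
  proof -
    have bounds: "Min (g ` set vs) \<le> g z \<and> g z \<le> Max (g ` set vs)" if "z \<in> ?W" for z
      using that WK gh by (auto simp: K_def mem_Times_iff)
    obtain s where s: "s \<in> \<Union>S" "g s = Min (g ` set vs)" using touches[OF gh] by blast
    obtain s' where s': "s' \<in> \<Union>S" "g s' = Max (g ` set vs)" using touches[OF gh] by blast
    show ?thesis using s s' bounds by (intro conjI bexI[of _ s] bexI[of _ s'] ballI) auto
  qed
  show ?thesis
    using SW conn extremes[of fst snd] extremes[of snd fst] unfolding spans_def by simp
qed

theorem lemma4:
  fixes vs :: "pt list" and S :: "pt set set"
  assumes "simple_polygon vs"
    and "general_position vs"
    and "rectilinear_polygon vs"
    and "rectilinearly_convex (poly_region vs)"
    and "finite S"
    and "\<forall>s\<in>S. is_segment s"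
    and "\<Union>S \<subseteq> poly_region vs"
    and "\<forall>e\<in>extreme_edges vs. \<exists>s\<in>S. s \<inter> e \<noteq> {}"
    and "connected (\<Union>S)"
  shows "skeleton (poly_region vs) S"
proof -
  let ?W = "poly_region vs"
  have W: "box_connected ?W" using assms(4) by (rule rectilinearly_convex_imp_box_connected)
  have S: "spans (\<Union>S) ?W" using polygon_spans assms(1-3,7-9) by blast
  show ?thesis unfolding skeleton_def
  proof (intro conjI allI impI)
    show "\<Union>S \<subseteq> ?W" by fact
  next
    fix p q ps
    assume pq: "p \<notin> interior ?W \<and> q \<notin> interior ?W \<and>
        (\<forall>ps. shortest_rect_path p q ps \<and> at_most_one_corner ps \<longrightarrow> path_set ps \<inter> interior ?W \<noteq> {})"
      and ps: "shortest_rect_path p q ps \<and> at_most_one_corner ps"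
    from pq have hit: "path_set ps' \<inter> interior ?W \<noteq> {}"
      if "shortest_rect_path p q ps'" "at_most_one_corner ps'" for ps'
      using that by blast
    have "elbow_hv p q \<inter> interior ?W \<noteq> {}" "elbow_vh p q \<inter> interior ?W \<noteq> {}"
      using hit[OF elbow_list_hv_shortest] hit[OF elbow_list_vh_shortest]
      by (simp_all add: elbow_list_hv(3) elbow_list_vh(3))
    then have "\<Union>S \<inter> elbow_hv p q \<noteq> {} \<and> \<Union>S \<inter> elbow_vh p q \<noteq> {}"
      using spans_meets_elbows[OF W S] pq by blast
    moreover have "elbow_hv p q \<subseteq> path_set ps \<or> elbow_vh p q \<subseteq> path_set ps"
      using shortest_one_corner_path_covers_elbow ps by blast
    ultimately show "\<exists>s\<in>S. path_set ps \<inter> s \<noteq> {}" by blast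
  qed
qed

end
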